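(* For every nonnegative integer $n$, $$\sum_{k=0}^{\infty}(-1)^k(4k+1)\,\frac{(-n)_k\,(-4n-\tfrac32)_k\,(\tfrac12)_k}{k!\,(n+\tfrac32)_k\,(4n+3)_k}=\left(\frac{2^8}{5^5}\right)^n\frac{(\tfrac54)_n(\tfrac34)_n(\tfrac32)_n^2}{(\tfrac65)_n(\tfrac75)_n(\tfrac35)_n(\tfrac45)_n}.$$ (The sum is finite, since $(-n)_k=0$ for $k>n$.)
   Context: $(a)_j=\Gamma(a+j)/\Gamma(a)=a(a+1)\cdots(a+j-1)$ denotes the rising factorial (Pochhammer symbol), with $(a)_0=1$. *)

theory Defs
  imports Complex_Main
begin

end

theory Submission
  imports Defs
begin

(* The summand of the theorem is the case d = 4n + 3 of the family
     F(m,k) = (-1)^k (4k+1) (-m)_k (3/2-d)_k (1/2)_k / (k! (m+3/2)_k (d)_k),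
   and for every real d > 0 and every m we prove  sum_k F(m,k) = (3/2)_m / (d)_m.
   This is done by the Wilf-Zeilberger method: with an explicit certificate
   G(m,k) = R(m,k) F(m+1,k) one has
     F(m+1,k) (d+m)/(m+3/2) - F(m,k) = G(m,k+1) - G(m,k),
   which reduces, via the two term ratios of F (in k and in m), to a rational
   identity; summing over k telescopes and gives a first order recursion in m.
   Finally, for d = 4n + 3 the quotient (3/2)_n / (4n+3)_n is evaluated with
   (4n+3)_n = (3)_{5n} / (3)_{4n} and the Gauss multiplication formula for
   rising factorials, which splits (3)_{4n} and (3)_{5n} into products of
   rising factorials of length n. *)

definition wp_term :: "real \<Rightarrow> nat \<Rightarrow> nat \<Rightarrow> real" where
  "wp_term d m k = (-1)^k * (4 * real k + 1) *
     (pochhammer (- real m) k * pochhammer (3/2 - d) k * pochhammer (1/2) k)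
     / (fact k * pochhammer (real m + 3/2) k * pochhammer d k)"

lemma pochhammer_shift:
  fixes x :: "'a::comm_semiring_1"
  shows "x * pochhammer (x + 1) k = pochhammer x k * (x + of_nat k)"
  by (metis pochhammer_Suc pochhammer_rec)

lemma wp_term_Suc_k:
  assumes "d > 0"
  shows "wp_term d m (Suc k) * ((real k + 1) * (real m + 3/2 + real k) * (d + real k) * (4 * real k + 1))
       = wp_term d m k * ((real m - real k) * (3/2 - d + real k) * (1/2 + real k) * (4 * real k + 5))"
proof -
  have "pochhammer d k > 0" "pochhammer (real m + 3/2) k > 0"
    using assms by (auto intro: pochhammer_pos)
  moreover have "d + real k \<noteq> 0" "real m + 3/2 + real k \<noteq> 0" using assms by auto
  ultimately show ?thesis
    unfolding wp_term_def by (simp add: pochhammer_Suc divide_simps) algebra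
qed

(* Term ratio in the parameter: F(m,k) / F(m+1,k), written without division so
   that it also covers the indices k > m + 1 where both terms vanish. *)
lemma wp_term_Suc_m:
  "wp_term d m k * ((real m + 1) * (real m + 3/2))
     = wp_term d (Suc m) k * ((real m + 1 - real k) * (real m + 3/2 + real k))"
proof -
  define c where "c = (-1)^k * (4 * real k + 1) * pochhammer (3/2 - d) k * pochhammer (1/2) k
                        / (fact k * pochhammer d k)"
  define P P' X X' where "P = pochhammer (- real m) k" and "P' = pochhammer (- real (Suc m)) k"
    and "X = pochhammer (real m + 3/2) k" and "X' = pochhammer (real (Suc m) + 3/2) k"
  have wp: "wp_term d m k = c * P / X" "wp_term d (Suc m) k = c * P' / X'"
    unfolding wp_term_def c_def P_def P'_def X_def X'_def by (simp_all add: ac_simps)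
  have "P * (real m + 1) = P' * (real m + 1 - real k)"
    using pochhammer_shift[of "- real (Suc m)" k] unfolding P_def P'_def
    by (simp add: algebra_simps)
  moreover have "X' * (real m + 3/2) = X * (real m + 3/2 + real k)"
    using pochhammer_shift[of "real m + 3/2" k] unfolding X_def X'_def by (simp add: algebra_simps)
  moreover have "X > 0" "X' > 0" unfolding X_def X'_def by (simp_all add: pochhammer_pos)
  ultimately show ?thesis
    unfolding wp by (simp add: field_simps) algebra
qed

definition wz_cert :: "real \<Rightarrow> nat \<Rightarrow> nat \<Rightarrow> real" where
  "wz_cert d m k =
     - 4 * real k * ((d - 1) * (real m + 3/2) + (real m + d + 1/2) * real k + (real k)^2)
     / ((4 * real k + 1) * (real m + 1) * (2 * real m + 3)) * wp_term d (Suc m) k"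

(* The WZ pair equation.  Both sides are F(m+1,k) times a rational function of
   d, m, k, by the two term ratios; what remains is a rational identity. *)
lemma wz_telescoping:
  assumes d: "d > 0"
  shows "wp_term d (Suc m) k * ((d + real m) / (real m + 3/2)) - wp_term d m k
       = wz_cert d m (Suc k) - wz_cert d m k"
proof -
  define t where "t = wp_term d (Suc m) k"
  have below: "wp_term d m k
      = t * ((real m + 1 - real k) * (real m + 3/2 + real k)) / ((real m + 1) * (real m + 3/2))"
  proof -
    have "(real m + 1) * (real m + 3/2) \<noteq> 0" by simp
    then show ?thesis using wp_term_Suc_m[of d m k] unfolding t_def by (simp add: eq_divide_eq)
  qed
  have step: "wp_term d (Suc m) (Suc k)
      = t * ((real m + 1 - real k) * (3/2 - d + real k) * (1/2 + real k) * (4 * real k + 5))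
      / ((real k + 1) * (real m + 5/2 + real k) * (d + real k) * (4 * real k + 1))"
  proof -
    have "(real k + 1) * (real m + 5/2 + real k) * (d + real k) * (4 * real k + 1) \<noteq> 0"
      using d by (simp add: add_pos_nonneg)
    then show ?thesis using wp_term_Suc_k[OF d, of "Suc m" k] unfolding t_def
      by (simp add: eq_divide_eq algebra_simps)
  qed
  have nz: "real m + 1 \<noteq> 0" "2 * real m + 3 \<noteq> 0" "real m + 3/2 \<noteq> 0" "real k + 1 \<noteq> 0"
    "4 * real k + 1 \<noteq> 0" "4 * real k + 5 \<noteq> 0" "real m + 5/2 + real k \<noteq> 0" "d + real k \<noteq> 0"
    using d by simp_all
  show ?thesis
    unfolding below wz_cert_def step t_def[symmetric] using nz
    by (simp add: divide_simps) algebra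
qed

(* The sum terminates: (-m)_k = 0 for k > m. *)
lemma wp_term_eq_0: "m < k \<Longrightarrow> wp_term d m k = 0"
  unfolding wp_term_def using pochhammer_of_nat_eq_0_lemma[of m k, where 'a=real] by simp

lemma wz_cert_0: "wz_cert d m 0 = 0"
  by (simp add: wz_cert_def)

lemma wz_cert_vanishes: "wz_cert d m (Suc (Suc m)) = 0"
  by (simp add: wz_cert_def wp_term_eq_0)

(* The summation formula: sum_k F(m,k) = (3/2)_m / (d)_m.  Summing the WZ equation
   over k <= m+1 gives  S(m+1) (d+m)/(m+3/2) = S(m). *)
lemma wp_sum:
  assumes d: "d > 0"
  shows "(\<Sum>k\<le>m. wp_term d m k) = pochhammer (3/2) m / pochhammer d m"
proof (induction m)
  case 0
  show ?case by (simp add: wp_term_def)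
next
  case (Suc m)
  define c where "c = (d + real m) / (real m + 3/2)"
  define S where "S = (\<Sum>k\<le>Suc m. wp_term d (Suc m) k)"
  have c0: "c \<noteq> 0"
    using d unfolding c_def by (simp add: add_pos_nonneg)
  have "(\<Sum>k\<le>Suc m. wp_term d (Suc m) k * c - wp_term d m k)
      = (\<Sum>k<Suc (Suc m). wz_cert d m (Suc k) - wz_cert d m k)"
    unfolding c_def lessThan_Suc_atMost using wz_telescoping[OF d] by simp
  also have "\<dots> = 0"
    by (simp add: sum_lessThan_telescope wz_cert_vanishes wz_cert_0)
  finally have "S * c = (\<Sum>k\<le>Suc m. wp_term d m k)"
    unfolding S_def by (simp add: sum_subtractf sum_distrib_right del: sum.atMost_Suc)
  also have "\<dots> = pochhammer (3/2) m / pochhammer d m"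
    using Suc.IH by (simp add: wp_term_eq_0)
  finally have "S = pochhammer (3/2) m / pochhammer d m / c"
    by (rule eq_divide_imp[OF c0])
  then show ?case
    unfolding S_def c_def by (simp add: pochhammer_Suc)
qed

lemma pochhammer_multiplication:
  fixes a :: "'a::field_char_0"
  assumes r: "r > 0"
  shows "pochhammer a (r * n)
           = of_nat r ^ (r * n) * (\<Prod>j<r. pochhammer ((a + of_nat j) / of_nat r) n)"
proof (induction n)
  case 0
  show ?case by simp
next
  case (Suc n)
  have block: "pochhammer (a + of_nat (r * n)) r
      = of_nat r ^ r * (\<Prod>j<r. (a + of_nat j) / of_nat r + of_nat n)"
  proof -
    have "pochhammer (a + of_nat (r * n)) r = (\<Prod>j<r. a + of_nat (r * n) + of_nat j)"
      by (simp add: pochhammer_prod atLeast0LessThan)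
    also have "\<dots> = (\<Prod>j<r. of_nat r * ((a + of_nat j) / of_nat r + of_nat n))"
      using r by (intro prod.cong) (simp_all add: field_simps)
    finally show ?thesis by (simp add: prod.distrib)
  qed
  have "pochhammer a (r * Suc n) = pochhammer a (r * n) * pochhammer (a + of_nat (r * n)) r"
    by (simp only: mult_Suc_right add.commute[of r] pochhammer_product')
  also have "\<dots>
      = of_nat r ^ (r * Suc n) * (\<Prod>j<r. pochhammer ((a + of_nat j) / of_nat r) (Suc n))"
    unfolding Suc.IH block by (simp add: pochhammer_Suc prod.distrib power_add)
  finally show ?case .
qed

(* Evaluation of the right-hand side at d = 4n + 3, using (4n+3)_n = (3)_{5n}/(3)_{4n}
   and the multiplication formula for r = 4 and r = 5. *)
lemma pochhammer_ratio_closed_form: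
  "pochhammer (3/2) n / pochhammer (4 * real n + 3) n
     = (2^8 / 5^5) ^ n *
       (pochhammer (5/4) n * pochhammer (3/4) n * (pochhammer (3/2) n)^2)
       / (pochhammer (6/5) n * pochhammer (7/5) n * pochhammer (3/5) n * pochhammer (4/5) n)"
proof -
  have four: "pochhammer (3::real) (4 * n)
      = 4 ^ (4 * n) * (pochhammer (3/4) n * pochhammer 1 n * pochhammer (5/4) n * pochhammer (3/2) n)"
    using pochhammer_multiplication[of 4 "3::real" n] by (simp add: eval_nat_numeral mult_ac)
  have five: "pochhammer (3::real) (5 * n)
      = 5 ^ (5 * n) * (pochhammer (3/5) n * pochhammer (4/5) n * pochhammer 1 n
                       * pochhammer (6/5) n * pochhammer (7/5) n)"
    using pochhammer_multiplication[of 5 "3::real" n] by (simp add: eval_nat_numeral mult_ac)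
  have split: "pochhammer (3::real) (5 * n) = pochhammer 3 (4 * n) * pochhammer (4 * real n + 3) n"
    using pochhammer_product'[of "3::real" "4 * n" n] by (simp add: add.commute)
  have pos: "pochhammer (a::real) j > 0" if "a > 0" for a j
    using that by (rule pochhammer_pos)
  have pow: "(4::real) ^ (4 * n) = (2^8) ^ n" "(5::real) ^ (5 * n) = (5^5) ^ n"
    by (simp_all add: power_mult)
  have "pochhammer (3/2) n / pochhammer (4 * real n + 3) n
      = pochhammer (3/2) n * pochhammer 3 (4 * n) / pochhammer 3 (5 * n)"
    unfolding split using pos[of 3 "4 * n"] by simp
  also have "\<dots> = (2^8 / 5^5) ^ n *
       (pochhammer (5/4) n * pochhammer (3/4) n * (pochhammer (3/2) n)^2)
       / (pochhammer (6/5) n * pochhammer (7/5) n * pochhammer (3/5) n * pochhammer (4/5) n)"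
    unfolding four five pow
    using pos[of 1 n] pos[of "6/5" n] pos[of "7/5" n] pos[of "3/5" n] pos[of "4/5" n]
    by (simp add: field_simps power2_eq_square)
  finally show ?thesis .
qed

theorem theorem6:
  fixes n :: nat
  shows "(\<lambda>k. (-1::real)^k * (4 * real k + 1) *
            (pochhammer (- real n) k * pochhammer (- 4 * real n - 3/2) k * pochhammer (1/2) k)
            / (fact k * pochhammer (real n + 3/2) k * pochhammer (4 * real n + 3) k))
         sums ((2^8 / 5^5) ^ n *
            (pochhammer (5/4) n * pochhammer (3/4) n * (pochhammer (3/2) n)^2)
            / (pochhammer (6/5) n * pochhammer (7/5) n * pochhammer (3/5) n * pochhammer (4/5) n))"
proof -
  define d where "d = 4 * real n + 3"
  have shift: "3/2 - d = - 4 * real n - 3/2"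
    unfolding d_def by simp
  have summand: "(\<lambda>k. (-1::real)^k * (4 * real k + 1) *
            (pochhammer (- real n) k * pochhammer (- 4 * real n - 3/2) k * pochhammer (1/2) k)
            / (fact k * pochhammer (real n + 3/2) k * pochhammer (4 * real n + 3) k)) = wp_term d n"
    unfolding wp_term_def shift unfolding d_def ..
  have "wp_term d n sums (\<Sum>k\<le>n. wp_term d n k)"
    by (rule sums_finite) (simp_all add: wp_term_eq_0)
  also have "(\<Sum>k\<le>n. wp_term d n k) = pochhammer (3/2) n / pochhammer (4 * real n + 3) n"
    using wp_sum[of d n] unfolding d_def by simp
  finally show ?thesis
    unfolding summand pochhammer_ratio_closed_form .
qed

end
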